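(* Let $(p(N))_{N\in\mathbb N}$ be any sequence in $(0,\frac12)$. Then $$\max_{N>k\ge2}\ \max_{\sigma_{k+1}(W)<n\le\sigma_k(W)}\big(\log_N k-\log_N W(n)\big)\to0\quad\text{in }\mathbb P_N^{p(N),-}\text{-probability as }N\to\infty.$$
   Context: Let $\mathbb W$ be the set of integer sequences $w=(w(0),w(1),\dots)$ with $w(n+1)-w(n)\in\{-1,1\}$. For $p\in(0,1)$ and $k\in\mathbb Z$, $\mathbb P_k^p$ is the law on $\mathbb W$ of the simple random walk $W$ with $W(0)=k$ stepping $+1$ with probability $p$ and $-1$ with probability $1-p$. $\tau_k(w):=\min\{n\in\mathbb N_0:w(n)=k\}$, $\tau_k^+(w):=\min\{n\in\mathbb N:w(n)=k\}$, and $\sigma_k(w):=\max\{n\in\mathbb N_0: w(n)=k,\ w(j)\ge1\text{ for all }j\in\{0,\dots,n-1\}\}$ (last visit of $k$ before hitting $0$). For $p<1/2$, $\mathbb P_N^{p,-}$ is $\mathbb P_N^p$ conditioned on $\{\tau_0<\tau_N^+\}$. $\log_N x=\log x/\log N$. *)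

theory Defs
  imports "HOL-Probability.Probability"
begin

text \<open>Law P_k^p of the simple random walk on the path space W (sequences nat => int),
  realised as the image of i.i.d. Bernoulli(p) steps (True = +1, False = -1).\<close>
definition srw_law :: "real \<Rightarrow> int \<Rightarrow> (nat \<Rightarrow> int) measure" where
  "srw_law p k = distr (PiM UNIV (\<lambda>_. measure_pmf (bernoulli_pmf p)))
                       (PiM UNIV (\<lambda>_. count_space UNIV))
                       (\<lambda>\<omega> n. k + (\<Sum>i<n. if \<omega> i then 1 else -1))"

definition hit_time :: "int \<Rightarrow> (nat \<Rightarrow> int) \<Rightarrow> enat" where
  "hit_time k w = (if \<exists>n. w n = k then enat (LEAST n. w n = k) else \<infinity>)"

definition hit_time_pos :: "int \<Rightarrow> (nat \<Rightarrow> int) \<Rightarrow> enat" where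
  "hit_time_pos k w = (if \<exists>n\<ge>1. w n = k then enat (LEAST n. 1 \<le> n \<and> w n = k) else \<infinity>)"

definition last_visit :: "int \<Rightarrow> (nat \<Rightarrow> int) \<Rightarrow> nat" where
  "last_visit k w = Max {n. w n = k \<and> (\<forall>j<n. w j \<ge> 1)}"

definition max_dev :: "nat \<Rightarrow> (nat \<Rightarrow> int) \<Rightarrow> real" where
  "max_dev N w = Max {log (real N) (real k) - log (real N) (real_of_int (w n)) | k n.
       2 \<le> k \<and> k < N \<and> last_visit (int k + 1) w < n \<and> n \<le> last_visit (int k) w}"

end

theory Submission
  imports Defs "HOL-Real_Asymp.Real_Asymp"
begin

(* Conditioned on reaching 0 before returning to N, the walk leaves k+1 for the last time by a step
   down to k and afterwards stays in (0, k].  So max_dev exceeds epsilon only if for some k the walk,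
   after this final step, dips to J = ceil(k N^-epsilon) - 1 before its last visit of k.  Splitting at
   the last visit of k+1 (strong Markov property), such a dip costs, relative to the plain final
   descent from k+1, the product of two gambler's ruin probabilities of the walk with drift, and an
   AM-GM estimate in r = (1-p)/p > 1 bounds this product by J/(k+1-J)^2 <= 4 N^-epsilon / k
   uniformly in p.  Summing over k bounds the conditional probability by 4 N^-epsilon ln N. *)

section \<open>The walk on path space\<close>

abbreviation path_space :: "(nat \<Rightarrow> int) measure" where
  "path_space \<equiv> PiM UNIV (\<lambda>_. count_space UNIV)"

abbreviation coin_space :: "real \<Rightarrow> (nat \<Rightarrow> bool) measure" where
  "coin_space p \<equiv> PiM UNIV (\<lambda>_. measure_pmf (bernoulli_pmf p))"

definition walk :: "int \<Rightarrow> (nat \<Rightarrow> bool) \<Rightarrow> nat \<Rightarrow> int" where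
  "walk k \<omega> n = k + (\<Sum>i<n. if \<omega> i then 1 else -1)"

lemma space_path_space [simp]: "space path_space = UNIV"
  by (auto simp: space_PiM)

lemma space_coin_space [simp]: "space (coin_space p) = UNIV"
  by (auto simp: space_PiM)

lemma measurable_walk: "walk k \<in> coin_space p \<rightarrow>\<^sub>M path_space"
proof (rule measurable_PiM_single')
  show "(\<lambda>\<omega>. walk k \<omega> n) \<in> coin_space p \<rightarrow>\<^sub>M count_space UNIV" for n
  proof (induction n)
    case 0
    then show ?case by (simp add: walk_def)
  next
    case (Suc n)
    have step: "(\<lambda>\<omega>. walk k \<omega> (Suc n)) = (\<lambda>\<omega>. walk k \<omega> n + (if \<omega> n then 1 else -1))"
      by (auto simp: walk_def)
    show ?case unfolding step using Suc by measurable
  qed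
qed auto

lemma srw_law_eq_distr: "srw_law p k = distr (coin_space p) path_space (walk k)"
  unfolding srw_law_def walk_def[abs_def] ..

lemma prob_space_srw_law: "prob_space (srw_law p k)"
  unfolding srw_law_eq_distr
  by (intro prob_space.prob_space_distr prob_space_PiM measurable_walk prob_space_measure_pmf)

lemma finite_measure_srw_law: "finite_measure (srw_law p k)"
  using prob_space_srw_law by (simp add: prob_space_def)

lemma emeasure_srw_law_eq_measure: "emeasure (srw_law p k) A = ennreal (measure (srw_law p k) A)"
  by (rule finite_measure.emeasure_eq_measure[OF finite_measure_srw_law])

lemma sets_srw_law [simp, measurable_cong]: "sets (srw_law p k) = sets path_space"
  unfolding srw_law_eq_distr by simp

lemma space_srw_law [simp]: "space (srw_law p k) = UNIV"
  unfolding srw_law_eq_distr by simp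

lemma emeasure_srw_law:
  "E \<in> sets path_space \<Longrightarrow> emeasure (srw_law p k) E = emeasure (coin_space p) (walk k -` E)"
  unfolding srw_law_eq_distr by (subst emeasure_distr) (auto intro: measurable_walk)

lemma measure_srw_law_cong_start:
  assumes "E1 \<in> sets path_space" "E2 \<in> sets path_space"
    and "\<And>w. w 0 = k \<Longrightarrow> w \<in> E1 \<longleftrightarrow> w \<in> E2"
  shows "measure (srw_law p k) E1 = measure (srw_law p k) E2"
proof -
  have "walk k -` E1 = walk k -` E2"
    using assms(3) by (auto simp: walk_def)
  then show ?thesis
    using emeasure_srw_law[OF assms(1)] emeasure_srw_law[OF assms(2)] by (simp add: measure_def)
qed

lemma measure_srw_law_null_start:
  assumes "E \<in> sets path_space" "\<And>w. w 0 = k \<Longrightarrow> w \<notin> E"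
  shows "measure (srw_law p k) E = 0"
  using measure_srw_law_cong_start[of E "{}" k p] assms by simp

lemma measure_srw_law_full_start:
  assumes "E \<in> sets path_space" "\<And>w. w 0 = k \<Longrightarrow> w \<in> E"
  shows "measure (srw_law p k) E = 1"
  using measure_srw_law_cong_start[of E UNIV k p] assms sets.top[of path_space] prob_space.prob_space[OF prob_space_srw_law] by simp

lemma walk_case_nat: "walk k (case_nat b \<omega>) = case_nat k (walk (k + (if b then 1 else -1)) \<omega>)"
proof
  show "walk k (case_nat b \<omega>) n = case_nat k (walk (k + (if b then 1 else -1)) \<omega>) n" for n
  proof (cases n)
    case (Suc m)
    have "walk k (case_nat b \<omega>) (Suc m) = k + ((if b then 1 else -1) + (\<Sum>i<m. if \<omega> i then 1 else -1))"
      unfolding walk_def by (subst sum.lessThan_Suc_shift) simp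
    then show ?thesis using Suc by (simp add: walk_def)
  qed (simp add: walk_def)
qed

lemma measurable_case_nat_path [measurable]: "case_nat (k::int) \<in> path_space \<rightarrow>\<^sub>M path_space"
  by (rule measurable_PiM_single') (auto split: nat.split)

lemma emeasure_coin_space_first_coin:
  assumes X: "X \<in> sets (coin_space p)" and p: "0 \<le> p" "p \<le> 1"
  shows "emeasure (coin_space p) X = ennreal p * emeasure (coin_space p) {\<omega>. case_nat True \<omega> \<in> X}
            + ennreal (1-p) * emeasure (coin_space p) {\<omega>. case_nat False \<omega> \<in> X}"
proof -
  let ?B = "measure_pmf (bernoulli_pmf p)"
  interpret S: sequence_space ?B ..
  interpret P: pair_sigma_finite ?B "coin_space p" ..
  let ?cons = "\<lambda>(s, \<omega>). case_nat s \<omega>"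
  have m: "?cons \<in> ?B \<Otimes>\<^sub>M coin_space p \<rightarrow>\<^sub>M coin_space p"
    by measurable
  have "emeasure (coin_space p) X = emeasure (distr (?B \<Otimes>\<^sub>M coin_space p) (coin_space p) ?cons) X"
    by (simp add: S.PiM_iter)
  also have "\<dots> = emeasure (?B \<Otimes>\<^sub>M coin_space p) (?cons -` X \<inter> space (?B \<Otimes>\<^sub>M coin_space p))"
    by (rule emeasure_distr[OF m X])
  also have "\<dots> = (\<integral>\<^sup>+s. emeasure (coin_space p) (Pair s -` (?cons -` X \<inter> space (?B \<Otimes>\<^sub>M coin_space p))) \<partial>?B)"
    by (rule S.emeasure_pair_measure_alt) (rule measurable_sets[OF m X])
  also have "\<dots> = (\<integral>\<^sup>+s. emeasure (coin_space p) {\<omega>. case_nat s \<omega> \<in> X} \<partial>?B)"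
    by (auto intro!: nn_integral_cong arg_cong2[where f=emeasure] simp: space_pair_measure)
  also have "\<dots> = emeasure (coin_space p) {\<omega>. case_nat True \<omega> \<in> X} * p
                 + emeasure (coin_space p) {\<omega>. case_nat False \<omega> \<in> X} * (1-p)"
    using p by simp
  finally show ?thesis by (simp add: mult.commute)
qed

lemma measure_srw_law_first_step:
  assumes E: "E \<in> sets path_space" and p: "0 \<le> p" "p \<le> 1"
  shows "measure (srw_law p k) E = p * measure (srw_law p (k+1)) {w. case_nat k w \<in> E}
            + (1-p) * measure (srw_law p (k-1)) {w. case_nat k w \<in> E}"
proof -
  have E': "{w. case_nat k w \<in> E} \<in> sets path_space"
    using measurable_sets[OF measurable_case_nat_path E] by (simp add: vimage_def)
  have X: "walk k -` E \<in> sets (coin_space p)"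
    using measurable_sets[OF measurable_walk E] by simp
  have "emeasure (srw_law p k) E = ennreal p * emeasure (coin_space p) {\<omega>. case_nat True \<omega> \<in> walk k -` E}
            + ennreal (1-p) * emeasure (coin_space p) {\<omega>. case_nat False \<omega> \<in> walk k -` E}"
    using emeasure_coin_space_first_coin[OF X p] emeasure_srw_law[OF E] by simp
  also have "{\<omega>. case_nat True \<omega> \<in> walk k -` E} = walk (k+1) -` {w. case_nat k w \<in> E}"
    by (auto simp: walk_case_nat)
  also have "{\<omega>. case_nat False \<omega> \<in> walk k -` E} = walk (k-1) -` {w. case_nat k w \<in> E}"
    by (auto simp: walk_case_nat)
  finally have "emeasure (srw_law p k) E = ennreal p * emeasure (srw_law p (k+1)) {w. case_nat k w \<in> E}
            + ennreal (1-p) * emeasure (srw_law p (k-1)) {w. case_nat k w \<in> E}"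
    using emeasure_srw_law[OF E'] by simp
  then show ?thesis
    using p by (simp add: emeasure_srw_law_eq_measure ennreal_mult[symmetric] ennreal_plus[symmetric] del: ennreal_plus)
qed

section \<open>Markov property\<close>

definition shift_path :: "nat \<Rightarrow> (nat \<Rightarrow> int) \<Rightarrow> nat \<Rightarrow> int" where
  "shift_path u w = (\<lambda>n. w (u + n))"

definition determined_until :: "nat \<Rightarrow> (nat \<Rightarrow> int) set \<Rightarrow> bool" where
  "determined_until u G \<longleftrightarrow> (\<forall>w w'. (\<forall>i\<le>u. w i = w' i) \<longrightarrow> (w \<in> G \<longleftrightarrow> w' \<in> G))"

lemma shift_path_apply [simp]: "shift_path s w n = w (s + n)"
  by (simp add: shift_path_def)

lemma shift_path_0 [simp]: "shift_path 0 w = w"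
  by (simp add: shift_path_def)

lemma shift_path_shift_path [simp]: "shift_path t (shift_path s w) = shift_path (s + t) w"
  by (simp add: shift_path_def add.assoc)

lemma measurable_shift_path [measurable]: "shift_path u \<in> path_space \<rightarrow>\<^sub>M path_space"
  unfolding shift_path_def by (rule measurable_PiM_single') auto

lemma sets_shift_path_preimage [measurable]:
  "F \<in> sets path_space \<Longrightarrow> {w. shift_path u w \<in> F} \<in> sets path_space"
  using measurable_sets[OF measurable_shift_path] by (simp add: vimage_def)

lemma measure_srw_law_markov_0:
  assumes F: "F \<in> sets path_space" and G: "G \<in> sets path_space" "determined_until 0 G" "\<forall>w\<in>G. w 0 = c"
  shows "measure (srw_law p x) (G \<inter> F) = measure (srw_law p x) G * measure (srw_law p c) F"
proof -
  have GF: "G \<inter> F \<in> sets path_space"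
    using G(1) F by simp
  show ?thesis
  proof (cases "(\<lambda>_. x) \<in> G")
    case True
    have G_start: "w 0 = x \<Longrightarrow> w \<in> G" for w
      using G(2) True unfolding determined_until_def by (metis le_zero_eq)
    have "measure (srw_law p x) (G \<inter> F) = measure (srw_law p x) F"
      using G_start by (intro measure_srw_law_cong_start GF F) auto
    moreover have "measure (srw_law p x) G = 1"
      using G_start by (intro measure_srw_law_full_start G(1))
    moreover have "c = x"
      using G(3) True by auto
    ultimately show ?thesis by simp
  next
    case False
    have "w 0 = x \<Longrightarrow> w \<notin> G" for w
      using G(2) False unfolding determined_until_def by (metis le_zero_eq)
    then show ?thesis
      by (simp add: measure_srw_law_null_start GF G(1))
  qed
qed

lemma measure_srw_law_markov:
  assumes p: "0 \<le> p" "p \<le> 1" and F: "F \<in> sets path_space"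
  shows "G \<in> sets path_space \<Longrightarrow> determined_until u G \<Longrightarrow> (\<forall>w\<in>G. w u = c) \<Longrightarrow>
    measure (srw_law p x) (G \<inter> {w. shift_path u w \<in> F}) = measure (srw_law p x) G * measure (srw_law p c) F"
proof (induction u arbitrary: x G)
  case 0
  then show ?case
    using measure_srw_law_markov_0[OF F] by simp
next
  case (Suc u)
  define G' where "G' = {w. case_nat x w \<in> G}"
  have G': "G' \<in> sets path_space"
    unfolding G'_def using measurable_sets[OF measurable_case_nat_path Suc(2)] by (simp add: vimage_def)
  have "determined_until u G'"
    using Suc(3) unfolding determined_until_def G'_def
    by (auto simp: le_Suc_eq all_conj_distrib split: nat.split)
  moreover have "\<forall>w\<in>G'. w u = c"
    using Suc(4) unfolding G'_def by auto
  ultimately have IH: "measure (srw_law p y) (G' \<inter> {w. shift_path u w \<in> F})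
      = measure (srw_law p y) G' * measure (srw_law p c) F" for y
    using Suc.IH[OF G'] by blast
  have GF: "G \<inter> {w. shift_path (Suc u) w \<in> F} \<in> sets path_space"
    using Suc(2) F by simp
  have "{w. case_nat x w \<in> G \<inter> {w. shift_path (Suc u) w \<in> F}} = G' \<inter> {w. shift_path u w \<in> F}"
    by (auto simp: G'_def shift_path_def)
  then have "measure (srw_law p x) (G \<inter> {w. shift_path (Suc u) w \<in> F})
     = p * measure (srw_law p (x+1)) (G' \<inter> {w. shift_path u w \<in> F})
       + (1-p) * measure (srw_law p (x-1)) (G' \<inter> {w. shift_path u w \<in> F})"
    using measure_srw_law_first_step[OF GF p] by simp
  also have "\<dots> = (p * measure (srw_law p (x+1)) G' + (1-p) * measure (srw_law p (x-1)) G')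
                  * measure (srw_law p c) F"
    unfolding IH by (simp add: algebra_simps)
  also have "p * measure (srw_law p (x+1)) G' + (1-p) * measure (srw_law p (x-1)) G' = measure (srw_law p x) G"
    using measure_srw_law_first_step[OF Suc(2) p] by (simp add: G'_def)
  finally show ?case .
qed

lemma sums_measure_srw_law_markov:
  assumes p: "0 \<le> p" "p \<le> 1" and F: "F \<in> sets path_space"
    and \<Phi>: "\<And>t. \<Phi> t \<in> sets path_space" "\<And>t. determined_until t (\<Phi> t)" "\<And>t w. w \<in> \<Phi> t \<Longrightarrow> w t = c"
    and disj: "disjoint_family (\<lambda>t. \<Phi> t \<inter> {w. shift_path t w \<in> F})"
  shows "(\<lambda>t. measure (srw_law p x) (\<Phi> t) * measure (srw_law p c) F)
           sums measure (srw_law p x) (\<Union>t. \<Phi> t \<inter> {w. shift_path t w \<in> F})"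
proof -
  have "(\<lambda>t. measure (srw_law p x) (\<Phi> t \<inter> {w. shift_path t w \<in> F}))
          sums measure (srw_law p x) (\<Union>t. \<Phi> t \<inter> {w. shift_path t w \<in> F})"
    using \<Phi>(1) F disj by (intro measure_UNION) (auto simp: emeasure_srw_law_eq_measure)
  moreover have "measure (srw_law p x) (\<Phi> t \<inter> {w. shift_path t w \<in> F})
                   = measure (srw_law p x) (\<Phi> t) * measure (srw_law p c) F" for t
    using measure_srw_law_markov[OF p F \<Phi>(1) \<Phi>(2)] \<Phi>(3) by auto
  ultimately show ?thesis by simp
qed

definition reach_at :: "int set \<Rightarrow> int \<Rightarrow> nat \<Rightarrow> (nat \<Rightarrow> int) set" where
  "reach_at S c t = {w. w t = c \<and> (\<forall>i<t. w i \<in> S)}"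

definition reach :: "int set \<Rightarrow> int \<Rightarrow> (nat \<Rightarrow> int) set" where
  "reach S c = (\<Union>t. reach_at S c t)"

definition reach_then :: "int set \<Rightarrow> int \<Rightarrow> (nat \<Rightarrow> int) set \<Rightarrow> (nat \<Rightarrow> int) set" where
  "reach_then S c F = (\<Union>t. reach_at S c t \<inter> {w. shift_path t w \<in> F})"

definition step_then :: "int \<Rightarrow> (nat \<Rightarrow> int) set \<Rightarrow> (nat \<Rightarrow> int) set" where
  "step_then c F = {v. v 1 = c \<and> shift_path 1 v \<in> F}"

lemma sets_reach_at [measurable]: "reach_at S c t \<in> sets path_space"
proof -
  have "{w \<in> space path_space. w t = c \<and> (\<forall>i<t. w i \<in> S)} \<in> sets path_space"
    by measurable
  then show ?thesis unfolding reach_at_def by simp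
qed

lemma sets_reach [measurable]: "reach S c \<in> sets path_space"
  unfolding reach_def by (intro sets.countable_UN) auto

lemma sets_reach_then [measurable]: "F \<in> sets path_space \<Longrightarrow> reach_then S c F \<in> sets path_space"
  unfolding reach_then_def by (intro sets.countable_UN) auto

lemma sets_step_then [measurable]: "F \<in> sets path_space \<Longrightarrow> step_then c F \<in> sets path_space"
proof -
  assume F: "F \<in> sets path_space"
  have "{v \<in> space path_space. v 1 = c} \<in> sets path_space"
    by measurable
  then have "{v. v 1 = c} \<inter> {v. shift_path 1 v \<in> F} \<in> sets path_space"
    using F by simp
  then show ?thesis
    by (simp add: step_then_def Collect_conj_eq)
qed

lemma reach_then_mono: "F \<subseteq> F' \<Longrightarrow> reach_then S c F \<subseteq> reach_then S c F'"
  unfolding reach_then_def by blast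

lemma reach_then_reach_subset:
  assumes "S \<subseteq> T"
  shows "reach_then S c (reach T d) \<subseteq> reach T d"
proof
  fix w assume "w \<in> reach_then S c (reach T d)"
  then obtain t1 t2 where t1: "w t1 = c" "\<forall>i<t1. w i \<in> S"
    and t2: "w (t1 + t2) = d" "\<forall>i<t2. w (t1 + i) \<in> T"
    by (auto simp: reach_then_def reach_def reach_at_def shift_path_def)
  have "w i \<in> T" if "i < t1 + t2" for i
  proof (cases "i < t1")
    case True
    then show ?thesis using t1 assms by auto
  next
    case False
    then show ?thesis using t2(2) that by (auto dest: spec[of _ "i - t1"])
  qed
  with t2(1) show "w \<in> reach T d"
    by (auto simp: reach_def reach_at_def)
qed

lemma disjoint_family_reach_at: "c \<notin> S \<Longrightarrow> disjoint_family (reach_at S c)"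
  unfolding disjoint_family_on_def reach_at_def
  by (auto, metis linorder_neqE_nat)

lemma shift_path_in_reach_then_iff:
  "shift_path s0 w \<in> reach_then S c F \<longleftrightarrow>
     (\<exists>s\<ge>s0. w s = c \<and> (\<forall>i. s0 \<le> i \<and> i < s \<longrightarrow> w i \<in> S) \<and> shift_path s w \<in> F)"
proof
  assume "shift_path s0 w \<in> reach_then S c F"
  then obtain t where t: "w (s0 + t) = c" "\<forall>i<t. w (s0 + i) \<in> S" "shift_path (s0 + t) w \<in> F"
    by (auto simp: reach_then_def reach_at_def)
  moreover have "w i \<in> S" if "s0 \<le> i" "i < s0 + t" for i
    using t(2) that by (auto dest: spec[of _ "i - s0"])
  ultimately show "\<exists>s\<ge>s0. w s = c \<and> (\<forall>i. s0 \<le> i \<and> i < s \<longrightarrow> w i \<in> S) \<and> shift_path s w \<in> F"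
    by (intro exI[of _ "s0 + t"]) auto
next
  assume "\<exists>s\<ge>s0. w s = c \<and> (\<forall>i. s0 \<le> i \<and> i < s \<longrightarrow> w i \<in> S) \<and> shift_path s w \<in> F"
  then obtain s where "s0 \<le> s" "w s = c" "\<forall>i. s0 \<le> i \<and> i < s \<longrightarrow> w i \<in> S" "shift_path s w \<in> F"
    by blast
  then have "shift_path s0 w \<in> reach_at S c (s - s0) \<inter> {v. shift_path (s - s0) v \<in> F}"
    by (auto simp: reach_at_def)
  then show "shift_path s0 w \<in> reach_then S c F"
    unfolding reach_then_def by blast
qed

lemma reach_eq_reach_then_UNIV: "reach S c = reach_then S c UNIV"
  by (simp add: reach_def reach_then_def)

lemma shift_path_in_reach_iff:
  "shift_path s0 w \<in> reach S c \<longleftrightarrow> (\<exists>s\<ge>s0. w s = c \<and> (\<forall>i. s0 \<le> i \<and> i < s \<longrightarrow> w i \<in> S))"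
  by (simp add: reach_eq_reach_then_UNIV shift_path_in_reach_then_iff)

lemma shift_path_in_step_then_iff:
  "shift_path u w \<in> step_then c F \<longleftrightarrow> w (Suc u) = c \<and> shift_path (Suc u) w \<in> F"
  by (simp add: step_then_def)

lemma determined_until_reach_at: "determined_until t (reach_at S c t)"
  unfolding determined_until_def reach_at_def by auto

lemma measure_reach_then:
  assumes p: "0 \<le> p" "p \<le> 1" and F: "F \<in> sets path_space" and c: "c \<notin> S"
  shows "measure (srw_law p x) (reach_then S c F) = measure (srw_law p x) (reach S c) * measure (srw_law p c) F"
proof -
  have disj: "disjoint_family (reach_at S c)"
    using c by (rule disjoint_family_reach_at)
  then have "disjoint_family (\<lambda>t. reach_at S c t \<inter> {w. shift_path t w \<in> F})"
    unfolding disjoint_family_on_def by blast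
  then have sums_then: "(\<lambda>t. measure (srw_law p x) (reach_at S c t) * measure (srw_law p c) F)
          sums measure (srw_law p x) (reach_then S c F)"
    unfolding reach_then_def
    by (intro sums_measure_srw_law_markov p F sets_reach_at determined_until_reach_at)
       (auto simp: reach_at_def)
  have "(\<lambda>t. measure (srw_law p x) (reach_at S c t)) sums measure (srw_law p x) (reach S c)"
    unfolding reach_def using disj
    by (intro measure_UNION) (auto simp: emeasure_srw_law_eq_measure)
  from sums_unique2[OF sums_then sums_mult2[OF this]] show ?thesis .
qed

lemma measure_step_then_down:
  assumes p: "0 \<le> p" "p \<le> 1" and F: "F \<in> sets path_space"
  shows "measure (srw_law p (c+1)) (step_then c F) = (1-p) * measure (srw_law p c) F"
proof -
  have start_c: "{w. w 0 = c} \<inter> F \<in> sets path_space"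
    using F by simp
  have "measure (srw_law p (c+1+1)) ({w. w 0 = c} \<inter> F) = 0"
    by (rule measure_srw_law_null_start[OF start_c]) auto
  moreover have "measure (srw_law p (c+1-1)) ({w. w 0 = c} \<inter> F) = measure (srw_law p c) F"
    unfolding add_diff_cancel_right' by (rule measure_srw_law_cong_start[OF start_c F]) auto
  moreover have "{w. case_nat (c+1) w \<in> step_then c F} = {w. w 0 = c} \<inter> F"
    by (auto simp: step_then_def shift_path_def)
  ultimately show ?thesis
    using measure_srw_law_first_step[OF sets_step_then[OF F] p, of "c+1"] by simp
qed

section \<open>Gambler's ruin\<close>

definition reach_by :: "int set \<Rightarrow> int \<Rightarrow> nat \<Rightarrow> (nat \<Rightarrow> int) set" where
  "reach_by S c T = (\<Union>t\<le>T. reach_at S c t)"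

lemma sets_reach_by [measurable]: "reach_by S c T \<in> sets path_space"
  unfolding reach_by_def by (intro sets.finite_UN) auto

lemma reach_by_start:
  assumes "w \<in> reach_by S c T" "w 0 \<noteq> c"
  shows "w 0 \<in> S" "T \<noteq> 0"
proof -
  obtain t where "t \<le> T" "w t = c" "\<forall>i<t. w i \<in> S"
    using assms(1) by (auto simp: reach_by_def reach_at_def)
  moreover from this have "t \<noteq> 0"
    using assms(2) by metis
  ultimately show "w 0 \<in> S" "T \<noteq> 0"
    by auto
qed

lemma case_nat_in_reach_at_Suc:
  "case_nat x w \<in> reach_at S c (Suc t) \<longleftrightarrow> x \<in> S \<and> w \<in> reach_at S c t"
  by (auto simp: reach_at_def less_Suc_eq_0_disj)

lemma case_nat_in_reach_by_Suc:
  assumes "x \<noteq> c" "x \<in> S"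
  shows "{w. case_nat x w \<in> reach_by S c (Suc T)} = reach_by S c T"
  using assms
  by (auto simp: reach_by_def atMost_Suc_eq_insert_0 case_nat_in_reach_at_Suc)
     (auto simp: reach_at_def)

lemma measure_reach_by_le_superharmonic:
  fixes a b c :: int and g :: "int \<Rightarrow> real"
  assumes p: "0 \<le> p" "p \<le> 1"
    and g_nonneg: "\<And>y. a \<le> y \<Longrightarrow> y \<le> b \<Longrightarrow> 0 \<le> g y" and g_c: "1 \<le> g c"
    and g_super: "\<And>y. a < y \<Longrightarrow> y < b \<Longrightarrow> p * g (y+1) + (1-p) * g (y-1) \<le> g y"
    and x: "a \<le> x" "x \<le> b"
  shows "measure (srw_law p x) (reach_by {a<..<b} c T) \<le> g x"
proof -
  let ?S = "{a<..<b}"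
  have trivial: "measure (srw_law p x) (reach_by ?S c T) \<le> g x"
    if "a \<le> x" "x \<le> b" "x = c \<or> x \<notin> ?S \<or> T = 0" for x T
  proof (cases "x = c")
    case True
    then show ?thesis
      using prob_space.prob_le_1[OF prob_space_srw_law] g_c order_trans by blast
  next
    case False
    then have "measure (srw_law p x) (reach_by ?S c T) = 0"
      using that reach_by_start by (intro measure_srw_law_null_start sets_reach_by) blast
    then show ?thesis
      using g_nonneg that by simp
  qed
  show ?thesis
    using x
  proof (induction T arbitrary: x)
    case 0
    then show ?case by (intro trivial) auto
  next
    case (Suc T)
    show ?case
    proof (cases "x = c \<or> x \<notin> ?S")
      case True
      then show ?thesis using Suc.prems by (intro trivial) auto
    next
      case False
      then have "measure (srw_law p x) (reach_by ?S c (Suc T))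
          = p * measure (srw_law p (x+1)) (reach_by ?S c T) + (1-p) * measure (srw_law p (x-1)) (reach_by ?S c T)"
        using measure_srw_law_first_step[OF sets_reach_by p] by (simp add: case_nat_in_reach_by_Suc)
      also have "\<dots> \<le> p * g (x+1) + (1-p) * g (x-1)"
        using Suc.IH False p by (intro add_mono mult_left_mono) auto
      also have "\<dots> \<le> g x"
        using g_super False by auto
      finally show ?thesis .
    qed
  qed
qed

lemma measure_reach_le_superharmonic:
  fixes a b c :: int and g :: "int \<Rightarrow> real"
  assumes p: "0 \<le> p" "p \<le> 1"
    and g_nonneg: "\<And>y. a \<le> y \<Longrightarrow> y \<le> b \<Longrightarrow> 0 \<le> g y" and g_c: "1 \<le> g c"
    and g_super: "\<And>y. a < y \<Longrightarrow> y < b \<Longrightarrow> p * g (y+1) + (1-p) * g (y-1) \<le> g y"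
    and x: "a \<le> x" "x \<le> b"
  shows "measure (srw_law p x) (reach {a<..<b} c) \<le> g x"
proof -
  have "incseq (reach_by {a<..<b} c)"
    unfolding incseq_def reach_by_def by (intro allI impI UN_mono) auto
  then have "(\<lambda>T. measure (srw_law p x) (reach_by {a<..<b} c T))
               \<longlonglongrightarrow> measure (srw_law p x) (\<Union>T. reach_by {a<..<b} c T)"
    by (intro finite_measure.finite_Lim_measure_incseq finite_measure_srw_law) auto
  moreover have "(\<Union>T. reach_by {a<..<b} c T) = reach {a<..<b} c"
    unfolding reach_by_def reach_def by auto
  ultimately show ?thesis
    using measure_reach_by_le_superharmonic[OF assms] by (auto intro: LIMSEQ_le_const2)
qed

lemma drift_power_harmonic:
  fixes p :: real and y :: int
  assumes "0 < p" "0 < y"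
  defines "r \<equiv> (1-p)/p"
  shows "p * r ^ nat (y+1) + (1-p) * r ^ nat (y-1) = r ^ nat y"
proof -
  obtain n where n: "nat y = Suc n"
    using assms(2) by (cases "nat y") auto
  then have "nat (y+1) = Suc (Suc n)" "nat (y-1) = n"
    by auto
  with n show ?thesis
    using assms(1) by (simp add: r_def field_simps power2_eq_square)
qed

lemma measure_reach_upper_le:
  fixes a b x :: int
  assumes p: "0 < p" "p < 1/2" and ab: "0 \<le> a" "a < b" and x: "a \<le> x" "x \<le> b"
  defines "r \<equiv> (1-p)/p"
  shows "measure (srw_law p x) (reach {a<..<b} b) \<le> (r^nat x - r^nat a)/(r^nat b - r^nat a)"
proof (rule measure_reach_le_superharmonic)
  have r: "1 < r"
    using p by (simp add: r_def field_simps)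
  then show "0 \<le> (r^nat y - r^nat a)/(r^nat b - r^nat a)" if "a \<le> y" "y \<le> b" for y
    using that ab by (intro divide_nonneg_nonneg) (auto intro: power_increasing)
  show "1 \<le> (r^nat b - r^nat a)/(r^nat b - r^nat a)"
    using r ab by (simp add: power_strict_increasing)
  show "p * ((r^nat (y+1) - r^nat a)/(r^nat b - r^nat a)) + (1-p) * ((r^nat (y-1) - r^nat a)/(r^nat b - r^nat a))
        \<le> (r^nat y - r^nat a)/(r^nat b - r^nat a)" if "a < y" "y < b" for y
  proof -
    have "p * (r^nat (y+1) - r^nat a) + (1-p) * (r^nat (y-1) - r^nat a) = r^nat y - r^nat a"
      using drift_power_harmonic[of p y] p that ab by (simp add: r_def algebra_simps)
    then show ?thesis
      by (simp add: add_divide_distrib[symmetric])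
  qed
qed (use p ab x in auto)

lemma measure_reach_lower_le:
  fixes a b x :: int
  assumes p: "0 < p" "p < 1/2" and ab: "0 \<le> a" "a < b" and x: "a \<le> x" "x \<le> b"
  defines "r \<equiv> (1-p)/p"
  shows "measure (srw_law p x) (reach {a<..<b} a) \<le> (r^nat b - r^nat x)/(r^nat b - r^nat a)"
proof (rule measure_reach_le_superharmonic)
  have r: "1 < r"
    using p by (simp add: r_def field_simps)
  then show "0 \<le> (r^nat b - r^nat y)/(r^nat b - r^nat a)" if "a \<le> y" "y \<le> b" for y
    using that ab by (intro divide_nonneg_nonneg) (auto intro: power_increasing)
  show "1 \<le> (r^nat b - r^nat a)/(r^nat b - r^nat a)"
    using r ab by (simp add: power_strict_increasing)
  show "p * ((r^nat b - r^nat (y+1))/(r^nat b - r^nat a)) + (1-p) * ((r^nat b - r^nat (y-1))/(r^nat b - r^nat a))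
        \<le> (r^nat b - r^nat y)/(r^nat b - r^nat a)" if "a < y" "y < b" for y
  proof -
    have "p * (r^nat b - r^nat (y+1)) + (1-p) * (r^nat b - r^nat (y-1)) = r^nat b - r^nat y"
      using drift_power_harmonic[of p y] p that ab by (simp add: r_def algebra_simps)
    then show ?thesis
      by (simp add: add_divide_distrib[symmetric])
  qed
qed (use p ab x in auto)

section \<open>Dips during the final descent\<close>

lemma geometric_sum_sq_ge:
  fixes r :: real assumes r: "0 \<le> r"
  shows "real m ^ 2 * r ^ (m - 1) \<le> (\<Sum>i<m. r ^ i) ^ 2"
proof -
  have "(\<Sum>i<m. r^i) = (\<Sum>i<m. r^(m - Suc i))"
    by (rule sum.nat_diff_reindex[symmetric])
  then have "2 * (\<Sum>i<m. r^i) = (\<Sum>i<m. r^i + r^(m - Suc i))"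
    by (simp add: sum.distrib)
  also have "\<dots> \<ge> (\<Sum>i<m. 2 * sqrt (r^(m-1)))"
  proof (rule sum_mono)
    fix i assume "i \<in> {..<m}"
    then have "r^i * r^(m - Suc i) = r^(m-1)"
      by (simp add: power_add[symmetric])
    then show "2 * sqrt (r^(m-1)) \<le> r^i + r^(m - Suc i)"
      using arith_geo_mean_sqrt[of "r^i" "r^(m - Suc i)"] r by simp
  qed
  finally have "real m * sqrt (r^(m-1)) \<le> (\<Sum>i<m. r^i)"
    by simp
  then have "(real m * sqrt (r^(m-1)))^2 \<le> (\<Sum>i<m. r^i)^2"
    using r by (intro power_mono) auto
  then show ?thesis
    using r by (simp add: power_mult_distrib)
qed

lemma power_diff_one_ratio_le:
  fixes r :: real
  assumes r: "1 < r" and J: "1 \<le> J" "J \<le> k"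
  shows "(r^J - 1) / (r^k - 1) \<le> real J / (\<Sum>i<k+1-J. r^i)"
proof -
  define B where "B = (\<Sum>i<k+1-J. r^i)"
  have B_pos: "0 < B"
    unfolding B_def using r J by (intro sum_pos) (auto simp: lessThan_empty_iff)
  have "(\<Sum>i<J. r^i) \<le> (\<Sum>i<J. r^(J-1))"
    using r by (intro sum_mono power_increasing) auto
  then have num: "r^J - 1 \<le> (r-1) * (real J * r^(J-1))"
    using r by (simp add: power_diff_1_eq[of r J])
  have B: "(r-1) * B = r^(k+1-J) - 1"
    unfolding B_def by (simp add: power_diff_1_eq)
  have "r^(J-1) * ((r-1) * B) = r^(J-1) * r^(k+1-J) - r^(J-1)"
    unfolding B by (simp add: algebra_simps)
  also have "\<dots> = r^k - r^(J-1)"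
    using J by (simp add: power_add[symmetric])
  also have "\<dots> \<le> r^k - 1"
    using r by simp
  finally have den: "r^(J-1) * ((r-1) * B) \<le> r^k - 1" .
  have "(r^J - 1) / (r^k - 1) \<le> ((r-1) * (real J * r^(J-1))) / (r^(J-1) * ((r-1) * B))"
    using num den r B_pos by (intro frac_le) auto
  also have "\<dots> = real J / B"
    using r B_pos by (simp add: field_simps)
  finally show ?thesis
    unfolding B_def .
qed

lemma ruin_product_le:
  fixes r :: real and J k :: nat
  assumes r: "1 < r" and J: "1 \<le> J" "J < k"
  shows "(r^(k+1) - r^k) / (r^(k+1) - r^J) * ((r^J - 1) / (r^k - 1)) \<le> real J / (real (k+1-J))^2"
proof -
  define m where "m = k + 1 - J"
  define B where "B = (\<Sum>i<m. r^i)"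
  have m: "2 \<le> m" "k = J + (m - 1)" "k + 1 = J + m"
    using J by (auto simp: m_def)
  have B_pos: "0 < B"
    unfolding B_def using r m by (intro sum_pos) (auto simp: lessThan_empty_iff)
  have rk: "r^k = r^J * r^(m-1)"
    using m(2) by (simp add: power_add)
  have B: "(r-1) * B = r^m - 1"
    unfolding B_def by (simp add: power_diff_1_eq)
  have top: "r^(k+1) - r^k = (r^J * (r - 1)) * r^(m-1)"
    using rk by (simp add: algebra_simps)
  have "r^(k+1) - r^J = r^J * (r^m - 1)"
    unfolding m(3) by (simp add: power_add algebra_simps)
  then have bottom: "r^(k+1) - r^J = (r^J * (r - 1)) * B"
    unfolding B[symmetric] by (simp add: mult.assoc)
  have first: "(r^(k+1) - r^k) / (r^(k+1) - r^J) = r^(m-1) / B"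
    unfolding top bottom using r by (intro nonzero_mult_divide_mult_cancel_left) simp
  have "(r^(k+1) - r^k) / (r^(k+1) - r^J) * ((r^J - 1) / (r^k - 1)) \<le> r^(m-1) / B * (real J / B)"
    unfolding first B_def m_def
    using power_diff_one_ratio_le[OF r J(1)] J r B_pos
    by (intro mult_left_mono) (auto simp: B_def m_def)
  also have "\<dots> = real J * r^(m-1) / B^2"
    by (simp add: power2_eq_square)
  also have "\<dots> \<le> real J * r^(m-1) / (real m ^ 2 * r^(m-1))"
    using geometric_sum_sq_ge[of r m] r m B_pos
    by (intro divide_left_mono mult_pos_pos) (auto simp: B_def)
  also have "\<dots> = real J / (real m)^2"
    using r by simp
  finally show ?thesis
    by (simp add: m_def)
qed

definition final_descent :: "int \<Rightarrow> (nat \<Rightarrow> int) set" where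
  "final_descent k = step_then k (reach {0<..<k+1} 0)"

definition final_descent_via :: "int \<Rightarrow> int \<Rightarrow> (nat \<Rightarrow> int) set" where
  "final_descent_via J k =
     step_then k (reach_then {J<..<k+1} J (reach_then {0<..<k} k (reach {0<..<k+1} 0)))"

lemma sets_final_descent [measurable]: "final_descent k \<in> sets path_space"
  unfolding final_descent_def by measurable

lemma sets_final_descent_via [measurable]: "final_descent_via J k \<in> sets path_space"
  unfolding final_descent_via_def by measurable

lemma final_descent_via_subset:
  assumes "1 \<le> J" "J < k"
  shows "final_descent_via J k \<subseteq> final_descent k"
proof -
  have "reach_then {J<..<k+1} J (reach_then {0<..<k} k (reach {0<..<k+1} 0))
        \<subseteq> reach_then {J<..<k+1} J (reach {0<..<k+1} 0)"
    using assms by (intro reach_then_mono reach_then_reach_subset) auto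
  also have "\<dots> \<subseteq> reach {0<..<k+1} 0"
    using assms by (intro reach_then_reach_subset) auto
  finally show ?thesis
    unfolding final_descent_via_def final_descent_def step_then_def by blast
qed

lemma measure_final_descent_via_le:
  fixes J k :: int
  assumes p: "0 < p" "p < 1/2" and J: "1 \<le> J" "J < k"
  shows "measure (srw_law p (k+1)) (final_descent_via J k)
           \<le> J / (k+1-J)^2 * measure (srw_law p (k+1)) (final_descent k)"
proof -
  define r where "r = (1-p)/p"
  have r: "1 < r"
    using p by (simp add: r_def field_simps)
  have p1: "0 \<le> p" "p \<le> 1"
    using p by auto
  define down where "down = measure (srw_law p k) (reach {0<..<k+1} 0)"
  define dip where "dip = measure (srw_law p k) (reach {J<..<k+1} J)"
  define climb where "climb = measure (srw_law p J) (reach {0<..<k} k)"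
  have final: "measure (srw_law p (k+1)) (final_descent k) = (1-p) * down"
    unfolding final_descent_def down_def by (rule measure_step_then_down[OF p1 sets_reach])
  have "dip * climb \<le> J / (k+1-J)^2"
  proof -
    have "dip * climb \<le> (r^nat (k+1) - r^nat k)/(r^nat (k+1) - r^nat J) * ((r^nat J - 1)/(r^nat k - 1))"
      unfolding dip_def climb_def r_def
      using measure_reach_lower_le[OF p, of J "k+1" k] measure_reach_upper_le[OF p, of 0 k J] J
      by (intro mult_mono') auto
    also have "\<dots> \<le> real (nat J) / (real (nat k + 1 - nat J))^2"
      using ruin_product_le[OF r, of "nat J" "nat k"] J by (simp add: nat_add_distrib)
    also have "\<dots> = J / (k+1-J)^2"
      using J by (simp add: of_nat_diff)
    finally show ?thesis .
  qed
  have "measure (srw_law p (k+1)) (final_descent_via J k) = (1-p) * down * (dip * climb)"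
    unfolding final_descent_via_def down_def dip_def climb_def
    by (simp add: measure_step_then_down[OF p1] measure_reach_then[OF p1])
  also have "\<dots> \<le> (1-p) * down * (J / (k+1-J)^2)"
    using \<open>dip * climb \<le> J / (k+1-J)^2\<close> p by (intro mult_left_mono) (auto simp: down_def)
  also have "\<dots> = J / (k+1-J)^2 * measure (srw_law p (k+1)) (final_descent k)"
    unfolding final by simp
  finally show ?thesis .
qed

lemma shift_path_in_final_descent_iff:
  "shift_path u w \<in> final_descent k \<longleftrightarrow>
     w (Suc u) = k \<and> (\<exists>T\<ge>Suc u. w T = 0 \<and> (\<forall>i. Suc u \<le> i \<and> i < T \<longrightarrow> w i \<in> {0<..<k+1}))"
  by (simp add: final_descent_def shift_path_in_step_then_iff shift_path_in_reach_iff)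

(* Paths at c at time u that have neither been absorbed at 0 nor returned to N so far;
   for c = k+1 and u the last visit of k+1 this is the prefix before the final descent. *)
definition approach :: "int \<Rightarrow> int \<Rightarrow> nat \<Rightarrow> (nat \<Rightarrow> int) set" where
  "approach N c u = {w. w u = c \<and> (\<forall>i\<le>u. 1 \<le> w i) \<and> (\<forall>i. 1 \<le> i \<and> i \<le> u \<longrightarrow> w i \<noteq> N)}"

definition descends :: "int \<Rightarrow> int \<Rightarrow> (nat \<Rightarrow> int) set" where
  "descends N k = (\<Union>u. approach N (k+1) u \<inter> {w. shift_path u w \<in> final_descent k})"

definition descends_via :: "int \<Rightarrow> int \<Rightarrow> int \<Rightarrow> (nat \<Rightarrow> int) set" where
  "descends_via N J k = (\<Union>u. approach N (k+1) u \<inter> {w. shift_path u w \<in> final_descent_via J k})"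

lemma sets_approach [measurable]: "approach N c u \<in> sets path_space"
proof -
  have "{w \<in> space path_space. w u = c \<and> (\<forall>i\<le>u. 1 \<le> w i) \<and> (\<forall>i. 1 \<le> i \<and> i \<le> u \<longrightarrow> w i \<noteq> N)}
          \<in> sets path_space"
    by measurable
  then show ?thesis
    unfolding approach_def by simp
qed

lemma determined_until_approach: "determined_until u (approach N c u)"
  unfolding determined_until_def approach_def by auto

lemma sets_descends_via [measurable]: "descends_via N J k \<in> sets path_space"
  unfolding descends_via_def
  by (intro sets.countable_UN image_subsetI sets.Int sets_approach sets_shift_path_preimage sets_final_descent_via)

lemma disjoint_family_descends:
  "disjoint_family (\<lambda>u. approach N (k+1) u \<inter> {w. shift_path u w \<in> final_descent k})"
proof -
  have False if uu': "u < u'" and approach: "w \<in> approach N (k+1) u'"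
    and descent: "shift_path u w \<in> final_descent k" for u u' w
  proof -
    obtain T where T: "Suc u \<le> T" "w T = 0" "\<forall>i. Suc u \<le> i \<and> i < T \<longrightarrow> w i \<in> {0<..<k+1}"
      using descent by (auto simp: shift_path_in_final_descent_iff)
    have "w u' = k+1" "\<forall>i\<le>u'. 1 \<le> w i"
      using approach by (auto simp: approach_def)
    then show False
    proof (cases "u' < T")
      case True
      then show False
        using T(3)[rule_format, of u'] uu' \<open>w u' = k+1\<close> by simp
    next
      case False
      then show False
        using T(2) \<open>\<forall>i\<le>u'. 1 \<le> w i\<close>[rule_format, of T] by simp
    qed
  qed
  then show ?thesis
    unfolding disjoint_family_on_def by (blast elim: linorder_neqE_nat)
qed

lemma measure_descends_via_le:
  fixes J k N :: int
  assumes p: "0 < p" "p < 1/2" and J: "1 \<le> J" "J < k"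
  shows "measure (srw_law p N) (descends_via N J k) \<le> J / (k+1-J)^2 * measure (srw_law p N) (descends N k)"
proof -
  let ?P = "\<lambda>u. measure (srw_law p N) (approach N (k+1) u)"
  define c where "c = J / (k+1-J)^2"
  have p1: "0 \<le> p" "p \<le> 1"
    using p by auto
  have via: "(\<lambda>u. ?P u * measure (srw_law p (k+1)) (final_descent_via J k)) sums measure (srw_law p N) (descends_via N J k)"
    unfolding descends_via_def
    using disjoint_family_descends[of N k] final_descent_via_subset[OF J]
    by (intro sums_measure_srw_law_markov p1 sets_final_descent_via sets_approach determined_until_approach)
       (auto simp: approach_def disjoint_family_on_def)
  have direct: "(\<lambda>u. c * (?P u * measure (srw_law p (k+1)) (final_descent k))) sums (c * measure (srw_law p N) (descends N k))"
    unfolding descends_def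
    by (intro sums_mult sums_measure_srw_law_markov p1 sets_final_descent sets_approach determined_until_approach
          disjoint_family_descends) (auto simp: approach_def)
  have "?P u * measure (srw_law p (k+1)) (final_descent_via J k) \<le> c * (?P u * measure (srw_law p (k+1)) (final_descent k))" for u
    using mult_left_mono[OF measure_final_descent_via_le[OF p J], of "?P u"] by (simp add: c_def mult_ac)
  then show ?thesis
    using sums_le[OF _ via direct] by (simp add: c_def)
qed

lemma hit_time_eq:
  assumes "w T = k" "\<forall>i<T. w i \<noteq> k"
  shows "hit_time k w = enat T"
proof -
  have "(LEAST n. w n = k) = T"
  proof (rule Least_equality)
    show "w T = k"
      by (rule assms(1))
    show "T \<le> y" if "w y = k" for y
      using assms(2) that not_le by blast
  qed
  moreover have "\<exists>n. w n = k"
    using assms(1) by blast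
  ultimately show ?thesis
    by (simp add: hit_time_def)
qed

lemma hit_time_pos_le:
  assumes "1 \<le> i" "w i = k"
  shows "hit_time_pos k w \<le> enat i"
proof -
  have "(LEAST n. 1 \<le> n \<and> w n = k) \<le> i"
    using assms by (intro Least_le) simp
  moreover have "\<exists>n\<ge>1. w n = k"
    using assms by blast
  ultimately show ?thesis
    by (simp add: hit_time_pos_def)
qed

lemma less_hit_time_pos:
  assumes "\<forall>i. 1 \<le> i \<and> i \<le> T \<longrightarrow> w i \<noteq> k"
  shows "enat T < hit_time_pos k w"
proof (cases "\<exists>n\<ge>1. w n = k")
  case True
  define m where "m = (LEAST n. 1 \<le> n \<and> w n = k)"
  have m: "1 \<le> m" "w m = k"
    unfolding m_def using LeastI_ex[of "\<lambda>n. 1 \<le> n \<and> w n = k"] True by auto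
  have "T < m"
  proof (rule ccontr)
    assume "\<not> T < m"
    then show False
      using assms m by auto
  qed
  then show ?thesis
    using True by (simp add: hit_time_pos_def m_def)
next
  case False
  then show ?thesis
    unfolding hit_time_pos_def if_not_P[OF False] by simp
qed

lemma descends_subset_absorbed:
  assumes "k < N"
  shows "descends N k \<subseteq> {w. hit_time 0 w < hit_time_pos N w}"
proof
  fix w assume "w \<in> descends N k"
  then obtain u T where u: "w u = k+1" "\<forall>i\<le>u. 1 \<le> w i" "\<forall>i. 1 \<le> i \<and> i \<le> u \<longrightarrow> w i \<noteq> N"
    and T: "Suc u \<le> T" "w T = 0" "\<forall>i. Suc u \<le> i \<and> i < T \<longrightarrow> w i \<in> {0<..<k+1}"
    by (auto simp: descends_def approach_def shift_path_in_final_descent_iff)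
  have "w i \<noteq> 0" if "i < T" for i
  proof (cases "i \<le> u")
    case True
    then show ?thesis using u(2) by force
  next
    case False
    then show ?thesis using T(3)[rule_format, of i] that by simp
  qed
  moreover have "w i \<noteq> N" if "1 \<le> i" "i \<le> T" for i
  proof (cases "i \<le> u")
    case True
    then show ?thesis using u(3) that by blast
  next
    case False
    have "0 \<le> k"
      using u(1) u(2)[rule_format, of u] by simp
    with False have "w i \<le> k"
      using T that by (cases "i = T") auto
    then show ?thesis
      using assms by simp
  qed
  ultimately show "w \<in> {w. hit_time 0 w < hit_time_pos N w}"
    using hit_time_eq[of w T 0] T(2) less_hit_time_pos by simp
qed

section \<open>Paths absorbed at zero\<close>

definition unit_steps :: "(nat \<Rightarrow> int) \<Rightarrow> bool" where
  "unit_steps w \<longleftrightarrow> (\<forall>i. \<bar>w (Suc i) - w i\<bar> = 1)"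

lemma unit_steps_uminus: "unit_steps w \<Longrightarrow> unit_steps (\<lambda>n. - w n)"
  by (simp add: unit_steps_def abs_minus_commute)

lemma unit_steps_crosses_down:
  assumes w: "unit_steps w" and ab: "a \<le> b" and y: "w b \<le> y" "y \<le> w a"
  shows "\<exists>t. a \<le> t \<and> t \<le> b \<and> w t = y"
  using ab y(1)
proof (induction b)
  case 0
  then show ?case using y(2) by auto
next
  case (Suc b)
  show ?case
  proof (cases "a \<le> b \<and> w b \<le> y")
    case True
    then show ?thesis using Suc.IH le_Suc_eq by blast
  next
    case False
    have "\<bar>w (Suc b) - w b\<bar> = 1"
      using w by (simp add: unit_steps_def)
    then have "w (Suc b) = y"
      using False Suc.prems y(2) by (cases "a = Suc b") auto
    then show ?thesis
      using Suc.prems by blast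
  qed
qed

lemma unit_steps_first_hit_down:
  assumes w: "unit_steps w" and ab: "a \<le> b" and y: "w b \<le> y" "y \<le> w a"
  obtains s where "a \<le> s" "s \<le> b" "w s = y" "\<forall>i. a \<le> i \<and> i < s \<longrightarrow> y < w i"
proof -
  define s where "s = (LEAST s. a \<le> s \<and> w s = y)"
  obtain t where t: "a \<le> t" "t \<le> b" "w t = y"
    using unit_steps_crosses_down[OF assms] by blast
  have s: "a \<le> s" "w s = y" "s \<le> t"
    unfolding s_def using t LeastI[of "\<lambda>s. a \<le> s \<and> w s = y" t] Least_le[of _ t] by auto
  have "y < w i" if "a \<le> i" "i < s" for i
  proof (rule ccontr)
    assume "\<not> y < w i"
    then obtain t' where "a \<le> t'" "t' \<le> i" "w t' = y"
      using unit_steps_crosses_down[OF w \<open>a \<le> i\<close> _ y(2)] by force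
    then have "s \<le> t'"
      unfolding s_def by (intro Least_le) simp
    with \<open>t' \<le> i\<close> \<open>i < s\<close> show False
      by simp
  qed
  with s t show ?thesis
    using that by auto
qed

lemma unit_steps_first_hit_up:
  assumes w: "unit_steps w" and ab: "a \<le> b" and y: "w a \<le> y" "y \<le> w b"
  obtains s where "a \<le> s" "s \<le> b" "w s = y" "\<forall>i. a \<le> i \<and> i < s \<longrightarrow> w i < y"
proof -
  obtain s where "a \<le> s" "s \<le> b" "- w s = - y" "\<forall>i. a \<le> i \<and> i < s \<longrightarrow> - y < - w i"
    using unit_steps_first_hit_down[OF unit_steps_uminus[OF w] ab, of "- y"] y by auto
  then show ?thesis
    using that by auto
qed

locale absorbed_path =
  fixes N :: nat and w :: "nat \<Rightarrow> int"
  assumes unit_steps: "unit_steps w" and start: "w 0 = int N"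
    and absorbed: "hit_time 0 w < hit_time_pos (int N) w"
begin

definition \<tau> :: nat where
  "\<tau> = (LEAST n. w n = 0)"

lemma ex_absorption: "\<exists>n. w n = 0"
  using absorbed by (auto simp: hit_time_def split: if_splits)

lemma at_absorption: "w \<tau> = 0"
  unfolding \<tau>_def using ex_absorption by (rule LeastI_ex)

lemma hit_time_absorption: "hit_time 0 w = enat \<tau>"
  using ex_absorption by (simp add: hit_time_def \<tau>_def)

lemma pos_before_absorption:
  assumes "i < \<tau>"
  shows "1 \<le> w i"
proof (rule ccontr)
  assume "\<not> 1 \<le> w i"
  then obtain t where "t \<le> i" "w t = 0"
    using unit_steps_crosses_down[OF unit_steps, of 0 i 0] start by auto
  then have "\<tau> \<le> t"
    unfolding \<tau>_def by (intro Least_le)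
  with \<open>t \<le> i\<close> assms show False
    by simp
qed

lemma no_return_before_absorption:
  assumes "1 \<le> i" "i \<le> \<tau>"
  shows "w i \<noteq> int N"
proof
  assume "w i = int N"
  then have "hit_time_pos (int N) w \<le> enat i"
    by (intro hit_time_pos_le assms(1))
  then have "enat \<tau> < enat i"
    using less_le_trans[OF absorbed[unfolded hit_time_absorption]] by blast
  with assms(2) show False
    by simp
qed

lemma visits_before_absorption:
  assumes "1 \<le> L"
  shows "{n. w n = L \<and> (\<forall>j<n. 1 \<le> w j)} = {n. n < \<tau> \<and> w n = L}"
proof -
  have "n < \<tau>" if n: "w n = L" "\<forall>j<n. 1 \<le> w j" for n
  proof (rule ccontr)
    assume "\<not> n < \<tau>"
    then have "\<tau> = n \<or> \<tau> < n"
      by auto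
    then show False
      using n assms at_absorption by auto
  qed
  then show ?thesis
    using pos_before_absorption by auto
qed

lemma last_visit_eq_Max:
  assumes "1 \<le> L"
  shows "last_visit L w = Max {n. n < \<tau> \<and> w n = L}"
  unfolding last_visit_def visits_before_absorption[OF assms] ..

lemma last_visit_before_absorption:
  assumes "1 \<le> L" "L \<le> int N"
  shows "last_visit L w < \<tau>" "w (last_visit L w) = L"
proof -
  obtain t where t: "t \<le> \<tau>" "w t = L"
    using unit_steps_crosses_down[OF unit_steps, of 0 \<tau> L] at_absorption start assms by auto
  then have "t < \<tau>"
    using at_absorption assms by (cases "t = \<tau>") auto
  with t have "{n. n < \<tau> \<and> w n = L} \<noteq> {}"
    by blast
  then have "last_visit L w \<in> {n. n < \<tau> \<and> w n = L}"
    unfolding last_visit_eq_Max[OF assms(1)] by (intro Max_in) auto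
  then show "last_visit L w < \<tau>" "w (last_visit L w) = L"
    by auto
qed

lemma le_last_visit:
  assumes "1 \<le> L" "n < \<tau>" "w n = L"
  shows "n \<le> last_visit L w"
  unfolding last_visit_eq_Max[OF assms(1)] using assms by (intro Max_ge) auto

lemma below_after_last_visit:
  fixes k :: nat
  assumes i: "last_visit (int k + 1) w < i" "i \<le> \<tau>"
  shows "w i \<le> int k"
proof (rule ccontr)
  assume "\<not> w i \<le> int k"
  then obtain t where t: "i \<le> t" "t \<le> \<tau>" "w t = int k + 1"
    using unit_steps_crosses_down[OF unit_steps i(2), of "int k + 1"] at_absorption by auto
  then have "t < \<tau>"
    using at_absorption by (cases "t = \<tau>") auto
  then have "t \<le> last_visit (int k + 1) w"
    using t by (intro le_last_visit) auto
  with i t show False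
    by simp
qed

lemma step_after_last_visit:
  fixes k :: nat
  assumes k: "k < N"
  shows "w (Suc (last_visit (int k + 1) w)) = int k"
proof -
  let ?u = "last_visit (int k + 1) w"
  have u: "w ?u = int k + 1" "?u < \<tau>"
    using last_visit_before_absorption[of "int k + 1"] k by auto
  then have "w (Suc ?u) \<le> int k"
    by (intro below_after_last_visit) auto
  moreover have "\<bar>w (Suc ?u) - w ?u\<bar> = 1"
    using unit_steps by (simp add: unit_steps_def)
  ultimately show ?thesis
    using u by auto
qed

lemma last_visit_succ_less:
  fixes k :: nat
  assumes k: "1 \<le> k" "k < N"
  shows "last_visit (int k + 1) w < last_visit (int k) w"
proof -
  let ?u = "last_visit (int k + 1) w"
  have "Suc ?u < \<tau>"
    using step_after_last_visit[OF k(2)] last_visit_before_absorption(1)[of "int k + 1"] at_absorption k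
    by (cases "Suc ?u = \<tau>") auto
  then show ?thesis
    using le_last_visit[of "int k" "Suc ?u"] step_after_last_visit[OF k(2)] k(1) by simp
qed

lemma in_descends_via:
  fixes k :: nat and J :: int
  assumes k: "1 \<le> k" "k < N" and J: "J \<le> int k"
    and n: "last_visit (int k + 1) w < n" "n \<le> last_visit (int k) w" "w n \<le> J"
  shows "w \<in> descends_via (int N) J (int k)"
proof -
  define u where "u = last_visit (int k + 1) w"
  define v where "v = last_visit (int k) w"
  have u: "u < \<tau>" "w u = int k + 1" and v: "v < \<tau>" "w v = int k"
    using last_visit_before_absorption[of "int k + 1"] last_visit_before_absorption[of "int k"] k
    by (auto simp: u_def v_def)
  have below: "w i \<le> int k" if "u < i" "i \<le> \<tau>" for i
    using below_after_last_visit that by (simp add: u_def)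
  have down: "w (Suc u) = int k"
    using step_after_last_visit[OF k(2)] by (simp add: u_def)
  obtain s where s: "Suc u \<le> s" "s \<le> n" "w s = J" "\<forall>i. Suc u \<le> i \<and> i < s \<longrightarrow> J < w i"
    using unit_steps_first_hit_down[OF unit_steps, of "Suc u" n J] n down J by (auto simp: u_def)
  obtain s' where s': "s \<le> s'" "s' \<le> v" "w s' = int k" "\<forall>i. s \<le> i \<and> i < s' \<longrightarrow> w i < int k"
    using unit_steps_first_hit_up[OF unit_steps, of s v "int k"] s(2,3) n(2) v(2) J by (auto simp: v_def)
  have "w i \<in> {0<..<int k + 1}" if "s' \<le> i" "i < \<tau>" for i
    using pos_before_absorption[of i] below[of i] that s(1) s'(1) by simp
  then have "shift_path s' w \<in> reach {0<..<int k + 1} 0"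
    unfolding shift_path_in_reach_iff using at_absorption s'(2) v(1) by (intro exI[of _ \<tau>]) simp
  moreover have "w i \<in> {0<..<int k}" if "s \<le> i" "i < s'" for i
    using pos_before_absorption[of i] s'(2,4) v(1) that by simp
  ultimately have "shift_path s w \<in> reach_then {0<..<int k} (int k) (reach {0<..<int k + 1} 0)"
    unfolding shift_path_in_reach_then_iff using s'(1,3) by blast
  moreover have "w i \<in> {J<..<int k + 1}" if "Suc u \<le> i" "i < s" for i
    using s(2,4) below[of i] n(2) v(1) that unfolding v_def by simp
  ultimately have "shift_path u w \<in> final_descent_via J (int k)"
    unfolding final_descent_via_def shift_path_in_step_then_iff shift_path_in_reach_then_iff
    using down s(1,3) by blast
  moreover have "w \<in> approach (int N) (int k + 1) u"
    unfolding approach_def using u pos_before_absorption no_return_before_absorption by auto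
  ultimately show ?thesis
    unfolding descends_via_def by blast
qed

lemma max_dev_witness:
  assumes N: "3 \<le> N" and large: "\<epsilon> < \<bar>max_dev N w\<bar>"
  obtains k n where "2 \<le> k" "k < N" "last_visit (int k + 1) w < n" "n \<le> last_visit (int k) w"
    "\<epsilon> < log (real N) (real k) - log (real N) (real_of_int (w n))"
proof -
  define f where "f k n = log (real N) (real k) - log (real N) (real_of_int (w n))" for k n
  define D where "D = {f k n | k n. 2 \<le> k \<and> k < N \<and> last_visit (int k + 1) w < n \<and> n \<le> last_visit (int k) w}"
  have max_dev: "max_dev N w = Max D"
    unfolding max_dev_def D_def f_def ..
  have "D \<subseteq> (\<lambda>(k, n). f k n) ` ({..<N} \<times> {..\<tau>})"
  proof
    fix x assume "x \<in> D"
    then obtain k n where kn: "x = f k n" "2 \<le> k" "k < N" "n \<le> last_visit (int k) w"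
      unfolding D_def by blast
    then have "n < \<tau>"
      using last_visit_before_absorption[of "int k"] by simp
    with kn show "x \<in> (\<lambda>(k, n). f k n) ` ({..<N} \<times> {..\<tau>})"
      by force
  qed
  then have "finite D"
    by (rule finite_subset) auto
  let ?v = "last_visit 2 w"
  have zero_in: "f 2 ?v \<in> D"
    unfolding D_def using last_visit_succ_less[of 2] N by force
  have "f 2 ?v = 0"
    using last_visit_before_absorption(2)[of 2] N by (simp add: f_def)
  then have "0 \<le> Max D"
    using Max_ge[OF \<open>finite D\<close> zero_in] by simp
  then have "\<epsilon> < Max D"
    using large max_dev by simp
  moreover have "Max D \<in> D"
    using \<open>finite D\<close> zero_in by (intro Max_in) auto
  then obtain k n where "Max D = f k n" "2 \<le> k" "k < N" "last_visit (int k + 1) w < n" "n \<le> last_visit (int k) w"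
    unfolding D_def by blast
  ultimately show ?thesis
    by (intro that[of k n]) (simp_all add: f_def)
qed

end

section \<open>Summation over the levels\<close>

lemma sets_irregular_paths [measurable]: "{w. \<not> unit_steps w \<or> w 0 \<noteq> c} \<in> sets path_space"
proof -
  have "{w \<in> space path_space. \<not> (\<forall>i. \<bar>w (Suc i) - w i\<bar> = 1) \<or> w 0 \<noteq> c} \<in> sets path_space"
    by measurable
  then show ?thesis
    by (simp add: unit_steps_def)
qed

lemma measure_irregular_paths: "measure (srw_law p c) {w. \<not> unit_steps w \<or> w 0 \<noteq> c} = 0"
proof -
  have "walk c -` {w. \<not> unit_steps w \<or> w 0 \<noteq> c} = {}"
    by (auto simp: walk_def unit_steps_def)
  then show ?thesis
    using emeasure_srw_law[OF sets_irregular_paths] by (simp add: measure_def)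
qed

(* The largest integer strictly below k theta; for theta = N^-epsilon and x >= 1,
   x <= dip_level theta k iff log_N k - log_N x > epsilon. *)
definition dip_level :: "real \<Rightarrow> nat \<Rightarrow> int" where
  "dip_level \<theta> k = \<lceil>real k * \<theta>\<rceil> - 1"

lemma dip_level_less: "real_of_int (dip_level \<theta> k) < real k * \<theta>"
  unfolding dip_level_def by linarith

lemma dip_level_less_self:
  assumes "\<theta> \<le> 1/2" "1 \<le> k"
  shows "dip_level \<theta> k < int k"
proof -
  have "real k * \<theta> \<le> real k / 2"
    using assms by (simp add: mult_left_mono[of \<theta> "1/2" "real k", simplified])
  then show ?thesis
    using dip_level_less[of \<theta> k] assms(2) by linarith
qed

lemma le_dip_level_of_log_gap:
  fixes N k :: nat and x :: int
  assumes N: "2 \<le> N" and x: "1 \<le> x" and k: "1 \<le> k"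
    and gap: "\<epsilon> < log (real N) (real k) - log (real N) (real_of_int x)"
  shows "x \<le> dip_level (real N powr - \<epsilon>) k"
proof -
  have "\<epsilon> < (ln (real k) - ln (real_of_int x)) / ln (real N)"
    using gap by (simp add: log_def diff_divide_distrib)
  then have "\<epsilon> * ln (real N) < ln (real k) - ln (real_of_int x)"
    using N by (simp add: pos_less_divide_eq)
  then have "ln (real_of_int x) < ln (real k * real N powr - \<epsilon>)"
    using k N by (simp add: ln_mult ln_powr)
  then have "real_of_int x < real k * real N powr - \<epsilon>"
    using x k N by (subst (asm) ln_less_cancel_iff) auto
  then show ?thesis
    unfolding dip_level_def by linarith
qed

lemma dip_ratio_le:
  fixes J :: int and k :: nat
  assumes J: "1 \<le> J" "J < real k * \<theta>" and \<theta>: "\<theta> \<le> 1/2" and k: "1 \<le> k"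
  shows "J / (int k + 1 - J)^2 \<le> 4 * \<theta> / k"
proof -
  have k_pos: "0 < real k"
    using k by simp
  have "real k * \<theta> \<le> real k / 2"
    using \<theta> k_pos by (simp add: mult_left_mono[of \<theta> "1/2" "real k", simplified])
  then have "real_of_int J < real k / 2"
    using J(2) by linarith
  then have "(real k / 2)^2 \<le> (real_of_int (int k + 1 - J))^2"
    using k_pos by (intro power_mono) auto
  then have "J / (int k + 1 - J)^2 \<le> J / (real k / 2)^2"
    using J k_pos by (intro divide_left_mono mult_pos_pos) auto
  also have "\<dots> = 4 * J / (real k)^2"
    by (simp add: power2_eq_square field_simps)
  also have "\<dots> \<le> 4 * (real k * \<theta>) / (real k)^2"
    using J by (intro divide_right_mono) auto
  also have "\<dots> = 4 * \<theta> / k"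
    using k_pos by (simp add: power2_eq_square field_simps)
  finally show ?thesis .
qed

lemma sum_inverse_le_ln:
  fixes N :: nat
  assumes "1 \<le> N"
  shows "(\<Sum>k=2..N. 1 / real k) \<le> ln (real N)"
  using assms
proof (induction N rule: dec_induct)
  case base
  then show ?case by simp
next
  case (step n)
  have "(\<Sum>k=2..Suc n. 1 / real k) = (\<Sum>k=2..n. 1 / real k) + 1 / real (Suc n)"
    using step by (simp add: atLeastAtMostSuc_conv)
  also have "\<dots> \<le> ln (real n) + 1 / real (Suc n)"
    using step by simp
  also have "\<dots> \<le> ln (real (Suc n))"
  proof -
    have "ln (real n / real (Suc n)) \<le> real n / real (Suc n) - 1"
      using step by (intro ln_le_minus_one) simp
    then show ?thesis
      using step by (simp add: ln_div field_simps)
  qed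
  finally show ?case .
qed

lemma (in absorbed_path) descends_via_of_large_max_dev:
  assumes N: "3 \<le> N" and \<theta>: "real N powr - \<epsilon> \<le> 1/2" and large: "\<epsilon> < \<bar>max_dev N w\<bar>"
  defines "J \<equiv> dip_level (real N powr - \<epsilon>)"
  shows "\<exists>k\<in>{2..<N}. 1 \<le> J k \<and> w \<in> descends_via (int N) (J k) (int k)"
proof -
  obtain k n where k: "2 \<le> k" "k < N" and n: "last_visit (int k + 1) w < n" "n \<le> last_visit (int k) w"
    and gap: "\<epsilon> < log (real N) (real k) - log (real N) (real_of_int (w n))"
    using max_dev_witness[OF N large] .
  have "1 \<le> w n"
    using pos_before_absorption last_visit_before_absorption(1)[of "int k"] k n(2) by simp
  moreover have "w n \<le> J k"
    unfolding J_def using le_dip_level_of_log_gap[OF _ \<open>1 \<le> w n\<close> _ gap] N k by simp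
  moreover have "J k < int k"
    unfolding J_def using dip_level_less_self[OF \<theta>] k by simp
  ultimately show ?thesis
    using in_descends_via[of k "J k" n] k n by (intro bexI[of _ k]) auto
qed

lemma measure_descends_via_dip_le:
  assumes p: "0 < p" "p < 1/2" and \<theta>: "0 < \<theta>" "\<theta> \<le> 1/2" and k: "1 \<le> k" "int k < N"
    and J: "1 \<le> dip_level \<theta> k"
    and A: "{w. hit_time 0 w < hit_time_pos N w} \<in> sets path_space"
  shows "measure (srw_law p N) (descends_via N (dip_level \<theta> k) (int k))
           \<le> 4 * \<theta> / k * measure (srw_law p N) {w. hit_time 0 w < hit_time_pos N w}"
proof -
  have "measure (srw_law p N) (descends_via N (dip_level \<theta> k) (int k))
          \<le> dip_level \<theta> k / (int k + 1 - dip_level \<theta> k)^2 * measure (srw_law p N) (descends N (int k))"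
    using measure_descends_via_le[OF p J dip_level_less_self[OF \<theta>(2) k(1)]] by simp
  also have "\<dots> \<le> 4 * \<theta> / k * measure (srw_law p N) (descends N (int k))"
    using dip_ratio_le[OF J dip_level_less \<theta>(2) k(1)] by (intro mult_right_mono) auto
  also have "\<dots> \<le> 4 * \<theta> / k * measure (srw_law p N) {w. hit_time 0 w < hit_time_pos N w}"
    using descends_subset_absorbed[OF k(2)] A \<theta>(1)
    by (intro mult_left_mono finite_measure.finite_measure_mono finite_measure_srw_law) auto
  finally show ?thesis .
qed

lemma measure_large_max_dev_le_sum:
  assumes N: "3 \<le> N" and \<theta>: "real N powr - \<epsilon> \<le> 1/2"
  defines "J \<equiv> dip_level (real N powr - \<epsilon>)"
  shows "measure (srw_law p (int N)) {w. \<epsilon> < \<bar>max_dev N w\<bar> \<and> hit_time 0 w < hit_time_pos (int N) w}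
           \<le> (\<Sum>k\<in>{k \<in> {2..<N}. 1 \<le> J k}. measure (srw_law p (int N)) (descends_via (int N) (J k) (int k)))"
    (is "measure ?M ?E \<le> (\<Sum>k\<in>?K. measure ?M (?bad k))")
proof -
  let ?irregular = "{w. \<not> unit_steps w \<or> w 0 \<noteq> int N}"
  have "w \<in> ?irregular \<union> (\<Union>k\<in>?K. ?bad k)"
    if large: "\<epsilon> < \<bar>max_dev N w\<bar>" and absorbed: "hit_time 0 w < hit_time_pos (int N) w" for w
  proof (cases "unit_steps w \<and> w 0 = int N")
    case True
    with absorbed have "absorbed_path N w"
      unfolding absorbed_path_def by simp
    then show ?thesis
      using absorbed_path.descends_via_of_large_max_dev[OF _ N \<theta> large] unfolding J_def by blast
  qed simp
  then have "?E \<subseteq> ?irregular \<union> (\<Union>k\<in>?K. ?bad k)"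
    by blast
  moreover have irregular: "?irregular \<in> sets ?M"
    using sets_irregular_paths by simp
  moreover have bad_sets: "(\<Union>k\<in>?K. ?bad k) \<in> sets ?M"
    using sets_descends_via by (intro sets.finite_UN) auto
  ultimately have "measure ?M ?E \<le> measure ?M (?irregular \<union> (\<Union>k\<in>?K. ?bad k))"
    by (intro finite_measure.finite_measure_mono finite_measure_srw_law sets.Un)
  also have "\<dots> \<le> measure ?M ?irregular + measure ?M (\<Union>k\<in>?K. ?bad k)"
    using irregular bad_sets by (rule measure_Un_le)
  also have "\<dots> \<le> (\<Sum>k\<in>?K. measure ?M (?bad k))"
    unfolding measure_irregular_paths add_0_left by (intro measure_UNION_le) auto
  finally show ?thesis .
qed

lemma cond_prob_large_max_dev_le:
  assumes p: "0 < p" "p < 1/2" and N: "3 \<le> N" and \<theta>: "real N powr - \<epsilon> \<le> 1/2"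
  shows "cond_prob (srw_law p (int N)) (\<lambda>w. \<epsilon> < \<bar>max_dev N w\<bar>) (\<lambda>w. hit_time 0 w < hit_time_pos (int N) w)
           \<le> 4 * real N powr - \<epsilon> * ln (real N)"
proof -
  define M where "M = srw_law p (int N)"
  define \<theta> where "\<theta> = real N powr - \<epsilon>"
  define A where "A = {w. hit_time 0 w < hit_time_pos (int N) w}"
  define K where "K = {k \<in> {2..<N}. 1 \<le> dip_level \<theta> k}"
  let ?bad = "\<lambda>k. descends_via (int N) (dip_level \<theta> k) (int k)"
  have \<theta>_pos: "0 < \<theta>"
    unfolding \<theta>_def using N by simp
  have bad: "measure M {w. \<epsilon> < \<bar>max_dev N w\<bar> \<and> w \<in> A} \<le> (\<Sum>k\<in>K. measure M (?bad k))"
    using measure_large_max_dev_le_sum[OF N \<theta>] unfolding M_def A_def K_def \<theta>_def by simp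
  show ?thesis
  proof (cases "measure M A = 0")
    case True
    then show ?thesis
      using \<theta>_pos N by (simp add: cond_prob_def M_def A_def \<theta>_def)
  next
    case False
    then have "A \<in> sets M"
      using measure_notin_sets by blast
    have "(\<Sum>k\<in>K. measure M (?bad k)) \<le> (\<Sum>k\<in>K. 4 * \<theta> / k * measure M A)"
      using measure_descends_via_dip_le[OF p \<theta>_pos \<theta>[folded \<theta>_def]] \<open>A \<in> sets M\<close>
      unfolding M_def A_def K_def by (intro sum_mono) auto
    also have "\<dots> = 4 * \<theta> * (\<Sum>k\<in>K. 1 / k) * measure M A"
      by (simp add: sum_distrib_left sum_distrib_right)
    also have "\<dots> \<le> 4 * \<theta> * ln N * measure M A"
    proof -
      have "(\<Sum>k\<in>K. 1 / real k) \<le> (\<Sum>k=2..N. 1 / real k)"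
        by (intro sum_mono2) (auto simp: K_def)
      also have "\<dots> \<le> ln N"
        using N by (intro sum_inverse_le_ln) simp
      finally show ?thesis
        using \<theta>_pos by (intro mult_right_mono) auto
    qed
    finally have "measure M {w. \<epsilon> < \<bar>max_dev N w\<bar> \<and> w \<in> A} \<le> 4 * \<theta> * ln N * measure M A"
      using bad by linarith
    moreover have "0 < measure M A"
      using False measure_nonneg[of M A] by linarith
    ultimately show ?thesis
      by (simp add: cond_prob_def M_def A_def \<theta>_def pos_divide_le_eq)
  qed
qed

theorem corollaryA9:
  fixes p :: "nat \<Rightarrow> real"
  assumes "\<And>N. 0 < p N \<and> p N < 1/2"
  shows "\<forall>\<epsilon>>0. (\<lambda>N. cond_prob (srw_law (p N) (int N))
                      (\<lambda>w. \<bar>max_dev N w\<bar> > \<epsilon>)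
                      (\<lambda>w. hit_time 0 w < hit_time_pos (int N) w)) \<longlonglongrightarrow> 0"
proof (intro allI impI)
  fix \<epsilon> :: real
  assume "\<epsilon> > 0"
  then have small: "(\<lambda>N. real N powr - \<epsilon>) \<longlonglongrightarrow> 0"
    and bound: "(\<lambda>N. 4 * real N powr - \<epsilon> * ln (real N)) \<longlonglongrightarrow> 0"
    by real_asymp+
  have "eventually (\<lambda>N. real N powr - \<epsilon> \<le> 1/2) sequentially"
    using order_tendstoD(2)[OF small, of "1/2"] by (auto elim: eventually_mono)
  then have "eventually (\<lambda>N. cond_prob (srw_law (p N) (int N)) (\<lambda>w. \<bar>max_dev N w\<bar> > \<epsilon>)
                 (\<lambda>w. hit_time 0 w < hit_time_pos (int N) w) \<le> 4 * real N powr - \<epsilon> * ln (real N)) sequentially"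
    using eventually_ge_at_top[of 3]
    by eventually_elim (use cond_prob_large_max_dev_le assms in auto)
  moreover have "eventually (\<lambda>N. 0 \<le> cond_prob (srw_law (p N) (int N)) (\<lambda>w. \<bar>max_dev N w\<bar> > \<epsilon>)
                 (\<lambda>w. hit_time 0 w < hit_time_pos (int N) w)) sequentially"
    by (simp add: cond_prob_def)
  ultimately show "(\<lambda>N. cond_prob (srw_law (p N) (int N)) (\<lambda>w. \<bar>max_dev N w\<bar> > \<epsilon>)
                      (\<lambda>w. hit_time 0 w < hit_time_pos (int N) w)) \<longlonglongrightarrow> 0"
    by (intro tendsto_sandwich[OF _ _ tendsto_const bound])
qed

end
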